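(* Let $X\in\mathbb{R}^{L\times S}$ be a matrix of location profiles, let $w_S\in\mathbb{R}^S$ and $w_L\in\mathbb{R}^L$ be weight vectors, and let $\Delta\in\mathbb{R}^{S\times S}$ and $\Sigma=\mathbf{1}_S v^T+v\mathbf{1}_S^T-\tfrac12\Delta$ (for some $v\in\mathbb{R}^S$) be as in the context, with $\Sigma$ positive definite. Let $P=I_S-\mathbf{1}_S w_S^T$ and $\tilde X=XP$. (DPCoA.) Let $U$ have as columns orthonormal eigenvectors of $D_{w_S}^{1/2}P(-\tfrac12\Delta)P^TD_{w_S}^{1/2}$ associated with its positive eigenvalues, collected in the diagonal matrix $\Lambda$, and put $Z=D_{w_S}^{-1/2}U\Lambda^{1/2}$ and $Y=XZ$. Let $r=\operatorname{rank}(Y)$, let $\Phi$ be the $r\times r$ diagonal matrix of the nonzero eigenvalues of $Y^TD_{w_L}Y$ in decreasing order, and let $F$ have as columns corresponding orthonormal eigenvectors ($F^TF=I_r$). The DPCoA location coordinates are $YF$ and the DPCoA species coordinates are $ZF$. (gPCA.) Let $\Psi$ be the diagonal matrix of the nonzero eigenvalues of $\tilde X^TD_{w_L}\tilde X\Sigma$ in decreasing order, and let $A\in\mathbb{R}^{S\times r'}$ have as columns corresponding eigenvectors normalized so that $A^T\Sigma A=I$. Then $r'=r$ and $\Psi=\Phi$. Moreover, if these nonzero eigenvalues are pairwise distinct, there is a diagonal matrix $E$ with diagonal entries in $\{+1,-1\}$ such that $$YF=\tilde X\Sigma A\,E\qquad\text{and}\qquad ZF=P\Sigma A\,E,$$ i.e.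 the location coordinates of DPCoA coincide with the gPCA coordinates $\tilde X\Sigma A$ of the triplet $(\tilde X,\Sigma,D_{w_L})$, and the DPCoA species coordinates coincide with $P\Sigma A$ (the images of the centered standard basis vectors $e_s$ under the gPCA transformation), up to the same column sign changes.
   Context: $S$ species and $L$ locations. $X\in\mathbb{R}^{L\times S}$ has nonnegative entries and each row sums to $1$ (each row is a location profile). $w_S\in\mathbb{R}^S$ and $w_L\in\mathbb{R}^L$ have strictly positive entries each summing to $1$; for a vector $w$, $D_w$ denotes the diagonal matrix with diagonal $w$, and $\mathbf{1}_m$ is the all-ones vector in $\mathbb{R}^m$. $\Delta\in\mathbb{R}^{S\times S}$ is a symmetric matrix with zero diagonal (a matrix of squared dissimilarities between species) which is Euclidean in the sense that $P(-\tfrac12\Delta)P^T$ is positive semidefinite, where $P=I_S-\mathbf{1}_Sw_S^T$. $v\in\mathbb{R}^S$ is any vector for which $\Sigma=\mathbf{1}_Sv^T+v\mathbf{1}_S^T-\tfrac12\Delta$ is positive definite. *)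

theory Defs
  imports Complex_Main "Jordan_Normal_Form.Matrix" "Jordan_Normal_Form.DL_Rank"
begin

definition ones_vec :: "nat \<Rightarrow> real vec" where
  "ones_vec n = vec n (\<lambda>_. 1)"

definition outer :: "real vec \<Rightarrow> real vec \<Rightarrow> real mat" where
  "outer x y = mat (dim_vec x) (dim_vec y) (\<lambda>(i,j). x $ i * y $ j)"

definition Dw :: "real vec \<Rightarrow> real mat" where
  "Dw w = mat_diag (dim_vec w) (\<lambda>i. w $ i)"
definition Dw_sqrt :: "real vec \<Rightarrow> real mat" where
  "Dw_sqrt w = mat_diag (dim_vec w) (\<lambda>i. sqrt (w $ i))"
definition Dw_invsqrt :: "real vec \<Rightarrow> real mat" where
  "Dw_invsqrt w = mat_diag (dim_vec w) (\<lambda>i. 1 / sqrt (w $ i))"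

definition diag_sqrt :: "real mat \<Rightarrow> real mat" where
  "diag_sqrt M = mat_diag (dim_row M) (\<lambda>i. sqrt (M $$ (i,i)))"

definition psd_mat :: "nat \<Rightarrow> real mat \<Rightarrow> bool" where
  "psd_mat n A \<longleftrightarrow> A \<in> carrier_mat n n \<and> A = transpose_mat A \<and>
     (\<forall>x \<in> carrier_vec n. 0 \<le> x \<bullet> (A *\<^sub>v x))"

definition pd_mat :: "nat \<Rightarrow> real mat \<Rightarrow> bool" where
  "pd_mat n A \<longleftrightarrow> A \<in> carrier_mat n n \<and> A = transpose_mat A \<and>
     (\<forall>x \<in> carrier_vec n. x \<noteq> 0\<^sub>v n \<longrightarrow> 0 < x \<bullet> (A *\<^sub>v x))"

definition in_col_span :: "real mat \<Rightarrow> real vec \<Rightarrow> bool" where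
  "in_col_span A x \<longleftrightarrow> (\<exists>c \<in> carrier_vec (dim_col A). x = A *\<^sub>v c)"

definition nonzero_decr_diag :: "nat \<Rightarrow> real mat \<Rightarrow> bool" where
  "nonzero_decr_diag n D \<longleftrightarrow> D \<in> carrier_mat n n \<and> diagonal_mat D \<and>
     (\<forall>i<n. D $$ (i,i) \<noteq> 0) \<and> (\<forall>i j. i < j \<longrightarrow> j < n \<longrightarrow> D $$ (j,j) \<le> D $$ (i,i))"

end

theory Submission
  imports Defs "Jordan_Normal_Form.Schur_Decomposition"
begin

text \<open>
  Write \<open>K = X\<^sup>T D\<^sub>w\<^sub>L X\<close>.  DPCoA diagonalises \<open>G = Z\<^sup>T K Z\<close> (since \<open>Y = X Z\<close>), gPCA
  diagonalises \<open>H = P\<^sup>T K P \<Sigma>\<close> (since \<open>Xt = X P\<close>), and the two problems are linked by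
  the factorisation \<open>Z Z\<^sup>T = P \<Sigma> P\<^sup>T\<close>: both sides equal \<open>P (-\<Delta>/2) P\<^sup>T\<close>, the right one
  because \<open>P\<close> annihilates the rank-one terms \<open>1 v\<^sup>T + v 1\<^sup>T\<close> of \<open>\<Sigma>\<close>, the left one because
  \<open>U, \<Lambda>\<close> is a complete positive eigen-system of the positive semidefinite matrix \<open>M\<close>, so
  that \<open>M = U \<Lambda> U\<^sup>T\<close>.  Under such a factorisation the maps \<open>A \<mapsto> Z\<^sup>T K P \<Sigma> A \<Psi>\<^sup>-\<^sup>1\<close> and
  \<open>F \<mapsto> P\<^sup>T K Z F \<Phi>\<^sup>-\<^sup>1\<close> carry normalised eigenvectors of one problem to normalised
  eigenvectors of the other with the same eigenvalues.  Completeness of both eigen-systems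
  then yields orthogonal changes of basis in both directions, hence \<open>r' = r\<close>, and a sorting
  argument gives \<open>\<Psi> = \<Phi>\<close>.  With distinct eigenvalues the orthogonal basis change
  commutes with \<open>\<Phi>\<close> and is therefore a diagonal matrix of signs.
\<close>

text \<open>Associativity and transposition rules stated with dimensions read off the matrices,
  so that they can be used as unconditional rewrite rules once the dimensions are simp facts.\<close>

lemma mult_assoc_dims:
  fixes A B C :: "'a::semiring_0 mat"
  shows "dim_col A = dim_row B \<Longrightarrow> dim_col B = dim_row C \<Longrightarrow> A * B * C = A * (B * C)"
  by (rule assoc_mult_mat[of A "dim_row A" "dim_col A" B "dim_col B" C "dim_col C"]) auto

lemma transpose_mult_dims:
  fixes A B :: "'a::comm_semiring_0 mat"
  shows "dim_col A = dim_row B \<Longrightarrow> transpose_mat (A * B) = transpose_mat B * transpose_mat A"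
  by (rule transpose_mult[of A "dim_row A" "dim_col A" B "dim_col B"]) auto

lemma mult_mat_vec_assoc_dims:
  fixes A B :: "'a::semiring_0 mat"
  shows "dim_col A = dim_row B \<Longrightarrow> dim_col B = dim_vec v \<Longrightarrow> (A * B) *\<^sub>v v = A *\<^sub>v (B *\<^sub>v v)"
  by (rule assoc_mult_mat_vec[of A "dim_row A" "dim_col A" B "dim_col B" v]) auto

lemma zero_mat_mult_vec [simp]:
  fixes x :: "'a::semiring_0 vec"
  shows "x \<in> carrier_vec m \<Longrightarrow> 0\<^sub>m n m *\<^sub>v x = 0\<^sub>v n"
  by (intro eq_vecI) (auto simp: scalar_prod_def)

lemma mult_mat_zero_vec [simp]:
  fixes A :: "'a::semiring_0 mat"
  shows "dim_col A = m \<Longrightarrow> A *\<^sub>v 0\<^sub>v m = 0\<^sub>v (dim_row A)"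
  by (intro eq_vecI) (auto simp: scalar_prod_def)

lemma symmetric_bilinear_form:
  fixes N :: "real mat"
  assumes N: "N \<in> carrier_mat n n" "transpose_mat N = N"
    and x: "x \<in> carrier_vec n" and y: "y \<in> carrier_vec n"
  shows "x \<bullet> (N *\<^sub>v y) = y \<bullet> (N *\<^sub>v x)"
proof -
  have "x \<bullet> (N *\<^sub>v y) = (transpose_mat N *\<^sub>v x) \<bullet> y"
    using transpose_vec_mult_scalar[OF N(1) y x] ..
  also have "\<dots> = y \<bullet> (N *\<^sub>v x)"
    using N x y by (simp add: comm_scalar_prod[of _ n])
  finally show ?thesis .
qed

lemma scalar_prod_self_pos:
  fixes x :: "real vec"
  assumes "x \<in> carrier_vec n" "x \<noteq> 0\<^sub>v n"
  shows "0 < x \<bullet> x"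
  using conjugate_square_greater_0_vec[OF assms(1)] assms(2) by simp

section \<open>Spectral facts for real symmetric matrices\<close>

definition mat_trace :: "'a::comm_ring_1 mat \<Rightarrow> 'a" where
  "mat_trace A = (\<Sum>i<dim_row A. A $$ (i,i))"

lemma mat_trace_mult_comm:
  fixes A B :: "'a::comm_ring_1 mat"
  assumes "A \<in> carrier_mat n m" "B \<in> carrier_mat m n"
  shows "mat_trace (A * B) = mat_trace (B * A)"
proof -
  have "mat_trace (A * B) = (\<Sum>i<n. \<Sum>j<m. A $$ (i,j) * B $$ (j,i))"
    using assms by (auto simp: mat_trace_def scalar_prod_def atLeast0LessThan intro!: sum.cong)
  also have "\<dots> = (\<Sum>j<m. \<Sum>i<n. B $$ (j,i) * A $$ (i,j))"
    by (subst sum.swap) (simp add: mult.commute)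
  also have "\<dots> = mat_trace (B * A)"
    using assms by (auto simp: mat_trace_def scalar_prod_def atLeast0LessThan intro!: sum.cong)
  finally show ?thesis .
qed

lemma mat_trace_similar:
  fixes A B :: "'a::comm_ring_1 mat"
  assumes "similar_mat_wit A B P Q"
  shows "mat_trace A = mat_trace B"
proof -
  from assms obtain n where c: "A \<in> carrier_mat n n" "B \<in> carrier_mat n n" "P \<in> carrier_mat n n"
     "Q \<in> carrier_mat n n" and QP: "Q * P = 1\<^sub>m n" and A: "A = P * B * Q"
    unfolding similar_mat_wit_def Let_def by auto
  have "mat_trace A = mat_trace (Q * (P * B))"
    unfolding A using c by (intro mat_trace_mult_comm) auto
  also have "Q * (P * B) = B" using c QP by (simp flip: assoc_mult_mat[of Q n n P n B n])
  finally show ?thesis .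
qed

lemma mat_trace_sum_eigenvalues:
  fixes A :: "complex mat"
  assumes A: "A \<in> carrier_mat n n" and cp: "char_poly A = (\<Prod>a\<leftarrow>as. [:- a, 1:])"
  shows "mat_trace A = sum_list as"
proof -
  obtain B P Q where "schur_decomposition A as = (B, P, Q)"
    by (cases "schur_decomposition A as") auto
  from schur_decomposition[OF A cp this] have "similar_mat_wit A B P Q" "diag_mat B = as"
    by auto
  thus ?thesis
    using mat_trace_similar
    by (auto simp: mat_trace_def diag_mat_def sum_list_sum_nth atLeast0LessThan)
qed

lemma real_imag_parts_eigen:
  fixes N :: "real mat"
  assumes N: "N \<in> carrier_mat n n" and v: "v \<in> carrier_vec n"
    and Nv: "map_mat complex_of_real N *\<^sub>v v = a \<cdot>\<^sub>v v"
  shows "N *\<^sub>v map_vec Re v = Re a \<cdot>\<^sub>v map_vec Re v - Im a \<cdot>\<^sub>v map_vec Im v"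
    and "N *\<^sub>v map_vec Im v = Im a \<cdot>\<^sub>v map_vec Re v + Re a \<cdot>\<^sub>v map_vec Im v"
proof -
  have comp: "(\<Sum>j<n. complex_of_real (N $$ (i,j)) * v $ j) = a * v $ i" if "i < n" for i
  proof -
    have "(map_mat complex_of_real N *\<^sub>v v) $ i = (\<Sum>j<n. complex_of_real (N $$ (i,j)) * v $ j)"
      using that N v by (auto simp: scalar_prod_def atLeast0LessThan intro!: sum.cong)
    thus ?thesis using Nv that v by simp
  qed
  have row: "(N *\<^sub>v w) $ i = (\<Sum>j<n. N $$ (i,j) * w $ j)" if "i < n" "w \<in> carrier_vec n" for i w
    using that N by (auto simp: scalar_prod_def atLeast0LessThan intro!: sum.cong)
  show "N *\<^sub>v map_vec Re v = Re a \<cdot>\<^sub>v map_vec Re v - Im a \<cdot>\<^sub>v map_vec Im v"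
  proof (rule eq_vecI)
    fix i assume "i < dim_vec (Re a \<cdot>\<^sub>v map_vec Re v - Im a \<cdot>\<^sub>v map_vec Im v)"
    hence i: "i < n" using v by simp
    show "(N *\<^sub>v map_vec Re v) $ i = (Re a \<cdot>\<^sub>v map_vec Re v - Im a \<cdot>\<^sub>v map_vec Im v) $ i"
      using arg_cong[OF comp[OF i], of Re] i v by (simp add: row Re_sum)
  qed (use N v in auto)
  show "N *\<^sub>v map_vec Im v = Im a \<cdot>\<^sub>v map_vec Re v + Re a \<cdot>\<^sub>v map_vec Im v"
  proof (rule eq_vecI)
    fix i assume "i < dim_vec (Im a \<cdot>\<^sub>v map_vec Re v + Re a \<cdot>\<^sub>v map_vec Im v)"
    hence i: "i < n" using v by simp
    show "(N *\<^sub>v map_vec Im v) $ i = (Im a \<cdot>\<^sub>v map_vec Re v + Re a \<cdot>\<^sub>v map_vec Im v) $ i"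
      using arg_cong[OF comp[OF i], of Im] i v by (simp add: row Im_sum)
  qed (use N v in auto)
qed

lemma real_symmetric_eigenvalue:
  fixes N :: "real mat"
  assumes N: "N \<in> carrier_mat n n" "transpose_mat N = N"
    and v: "v \<in> carrier_vec n" "v \<noteq> 0\<^sub>v n" and Nv: "map_mat complex_of_real N *\<^sub>v v = a \<cdot>\<^sub>v v"
  shows "Im a = 0 \<and> (\<exists>x\<in>carrier_vec n. x \<noteq> 0\<^sub>v n \<and> N *\<^sub>v x = Re a \<cdot>\<^sub>v x)"
proof -
  define re where "re = map_vec Re v"
  define im where "im = map_vec Im v"
  have re: "re \<in> carrier_vec n" and im: "im \<in> carrier_vec n" using v by (auto simp: re_def im_def)
  note Nre = real_imag_parts_eigen(1)[OF N(1) v(1) Nv, folded re_def im_def]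
  note Nim = real_imag_parts_eigen(2)[OF N(1) v(1) Nv, folded re_def im_def]
  have nz: "re \<noteq> 0\<^sub>v n \<or> im \<noteq> 0\<^sub>v n"
  proof (rule ccontr)
    assume "\<not> ?thesis"
    hence "re = 0\<^sub>v n" "im = 0\<^sub>v n" by auto
    hence "v $ i = 0" if "i < n" for i
    proof -
      have "Re (v $ i) = re $ i" "Im (v $ i) = im $ i" using that v by (auto simp: re_def im_def)
      thus ?thesis using \<open>re = 0\<^sub>v n\<close> \<open>im = 0\<^sub>v n\<close> that by (simp add: complex_eq_iff)
    qed
    hence "v = 0\<^sub>v n" using v by (intro eq_vecI) auto
    thus False using v by simp
  qed
  have "re \<bullet> (N *\<^sub>v im) = im \<bullet> (N *\<^sub>v re)" using symmetric_bilinear_form[OF N re im] .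
  hence "Im a * (re \<bullet> re) + Re a * (re \<bullet> im) = Re a * (im \<bullet> re) - Im a * (im \<bullet> im)"
    unfolding Nre Nim using re im
    by (simp add: scalar_prod_add_distrib[of _ n] scalar_prod_minus_distrib[of _ n])
  hence "Im a * (re \<bullet> re + im \<bullet> im) = 0"
    using comm_scalar_prod[OF re im] by (simp add: algebra_simps)
  moreover have "0 < re \<bullet> re + im \<bullet> im"
    using nz scalar_prod_self_pos[OF re] scalar_prod_self_pos[OF im]
      conjugate_square_ge_0_vec[of re] conjugate_square_ge_0_vec[of im]
    by (auto simp: add_pos_nonneg add_nonneg_pos)
  ultimately have Ima: "Im a = 0" by simp
  hence "N *\<^sub>v re = Re a \<cdot>\<^sub>v re" "N *\<^sub>v im = Re a \<cdot>\<^sub>v im" using Nre Nim re im by auto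
  thus ?thesis using Ima nz re im by blast
qed

text \<open>A positive semidefinite symmetric matrix with zero diagonal vanishes: testing the form
  on \<open>e\<^sub>i \<plusminus> e\<^sub>j\<close> shows \<open>\<plusminus>2 N\<^sub>i\<^sub>j \<ge> 0\<close>.\<close>

lemma psd_zero_diagonal_imp_zero:
  fixes N :: "real mat"
  assumes N: "N \<in> carrier_mat n n" "transpose_mat N = N"
    and psd: "\<forall>x\<in>carrier_vec n. 0 \<le> x \<bullet> (N *\<^sub>v x)"
    and diag: "\<forall>i<n. N $$ (i,i) = 0"
  shows "N = 0\<^sub>m n n"
proof (rule eq_matI)
  fix i j assume "i < dim_row (0\<^sub>m n n :: real mat)" "j < dim_col (0\<^sub>m n n :: real mat)"
  hence i: "i < n" and j: "j < n" by auto
  have form: "(unit_vec n i + s \<cdot>\<^sub>v unit_vec n j) \<bullet> (N *\<^sub>v (unit_vec n i + s \<cdot>\<^sub>v unit_vec n j))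
      = 2 * s * N $$ (i,j)" for s
  proof -
    have Nsym: "N $$ (j,i) = N $$ (i,j)"
      using N i j by (metis carrier_matD index_transpose_mat(1))
    have "N *\<^sub>v (unit_vec n i + s \<cdot>\<^sub>v unit_vec n j)
        = N *\<^sub>v unit_vec n i + s \<cdot>\<^sub>v (N *\<^sub>v unit_vec n j)"
      using N i j by (simp add: mult_add_distrib_mat_vec[OF N(1)] mult_mat_vec[OF N(1)])
    thus ?thesis
      using N i j diag Nsym
      by (simp add: add_scalar_prod_distrib[of _ n] scalar_prod_add_distrib[of _ n] algebra_simps)
  qed
  have "0 \<le> 2 * s * N $$ (i,j)" for s
    using psd form[of s] by (metis add_carrier_vec smult_carrier_vec unit_vec_carrier)
  from this[of 1] this[of "-1"] show "N $$ (i,j) = 0\<^sub>m n n $$ (i,j)" using i j by simp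
qed (use N in auto)

lemma psd_diagonal_nonneg:
  fixes N :: "real mat"
  assumes N: "N \<in> carrier_mat n n" and psd: "\<forall>x\<in>carrier_vec n. 0 \<le> x \<bullet> (N *\<^sub>v x)" and i: "i < n"
  shows "0 \<le> N $$ (i,i)"
  using psd[rule_format, of "unit_vec n i"] N i by simp

lemma psd_eigenvalue_nonneg:
  fixes N :: "real mat"
  assumes psd: "\<forall>x\<in>carrier_vec n. 0 \<le> x \<bullet> (N *\<^sub>v x)"
    and x: "x \<in> carrier_vec n" "x \<noteq> 0\<^sub>v n" and Nx: "N *\<^sub>v x = c \<cdot>\<^sub>v x"
  shows "0 \<le> c"
proof -
  have "0 \<le> c * (x \<bullet> x)" using psd x Nx by force
  thus ?thesis using scalar_prod_self_pos[OF x] by (simp add: zero_le_mult_iff)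
qed

text \<open>A nonzero symmetric positive semidefinite matrix has a positive eigenvalue: its trace is
  positive, so some complex eigenvalue is nonzero; it is real with a real eigenvector, and
  positive semidefiniteness makes it positive.\<close>

lemma psd_nonzero_positive_eigenvalue:
  fixes N :: "real mat"
  assumes N: "N \<in> carrier_mat n n" "transpose_mat N = N"
    and psd: "\<forall>x\<in>carrier_vec n. 0 \<le> x \<bullet> (N *\<^sub>v x)"
    and nz: "N \<noteq> 0\<^sub>m n n"
  shows "\<exists>x\<in>carrier_vec n. x \<noteq> 0\<^sub>v n \<and> (\<exists>c>0. N *\<^sub>v x = c \<cdot>\<^sub>v x)"
proof -
  obtain i0 where i0: "i0 < n" "N $$ (i0,i0) \<noteq> 0"
    using psd_zero_diagonal_imp_zero[OF N psd] nz by blast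
  have trace_pos: "0 < mat_trace N"
    unfolding mat_trace_def using N(1)
    by (simp, intro sum_pos2[of _ i0])
      (use i0 psd_diagonal_nonneg[OF N(1) psd] in \<open>auto simp: order.order_iff_strict\<close>)
  define Nc where "Nc = map_mat complex_of_real N"
  have Nc: "Nc \<in> carrier_mat n n" using N by (simp add: Nc_def)
  obtain as where cp: "char_poly Nc = (\<Prod>a\<leftarrow>as. [:- a, 1:])"
    using char_poly_factorized[OF Nc] by blast
  have "sum_list as = complex_of_real (mat_trace N)"
    using mat_trace_sum_eigenvalues[OF Nc cp] N by (simp add: mat_trace_def Nc_def)
  hence "sum_list as \<noteq> 0" using trace_pos by simp
  moreover have "sum_list as = 0" if "\<forall>a\<in>set as. a = 0" using that by (induct as) auto
  ultimately obtain a where a: "a \<in> set as" "a \<noteq> 0" by blast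
  have "poly (char_poly Nc) a = 0"
    unfolding cp using a by (simp add: poly_prod_list prod_list_zero_iff)
  hence "eigenvalue Nc a" using eigenvalue_root_char_poly[OF Nc] by simp
  then obtain v where "eigenvector Nc v a" unfolding eigenvalue_def by blast
  hence v: "v \<in> carrier_vec n" "v \<noteq> 0\<^sub>v n" "Nc *\<^sub>v v = a \<cdot>\<^sub>v v"
    using Nc unfolding eigenvector_def by auto
  from real_symmetric_eigenvalue[OF N v[unfolded Nc_def]] obtain x where
    Ima: "Im a = 0" and x: "x \<in> carrier_vec n" "x \<noteq> 0\<^sub>v n" "N *\<^sub>v x = Re a \<cdot>\<^sub>v x" by blast
  have "Re a \<noteq> 0" using a(2) Ima complex_eq_iff by auto
  hence "0 < Re a" using psd_eigenvalue_nonneg[OF psd x] by simp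
  thus ?thesis using x by blast
qed

text \<open>A symmetric matrix vanishing on the orthonormal columns of \<open>U\<close> is positive
  semidefinite as soon as its quadratic form is nonnegative on their orthogonal complement:
  \<open>x\<close> and its projection \<open>y = x - U U\<^sup>T x\<close> onto that complement give the same value.\<close>

lemma psd_from_orthogonal_complement:
  fixes N U :: "real mat"
  assumes N: "N \<in> carrier_mat S S" "transpose_mat N = N"
    and U: "U \<in> carrier_mat S k" "transpose_mat U * U = 1\<^sub>m k" and NU: "N * U = 0\<^sub>m S k"
    and compl: "\<And>y. y \<in> carrier_vec S \<Longrightarrow> transpose_mat U *\<^sub>v y = 0\<^sub>v k \<Longrightarrow> 0 \<le> y \<bullet> (N *\<^sub>v y)"
  shows "\<forall>x\<in>carrier_vec S. 0 \<le> x \<bullet> (N *\<^sub>v x)"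
proof
  fix x :: "real vec" assume x: "x \<in> carrier_vec S"
  define y where "y = x - U *\<^sub>v (transpose_mat U *\<^sub>v x)"
  have y: "y \<in> carrier_vec S" using x U by (simp add: y_def)
  have w: "transpose_mat U *\<^sub>v x \<in> carrier_vec k" using x U by simp
  have Uty: "transpose_mat U *\<^sub>v y = 0\<^sub>v k"
  proof -
    have "transpose_mat U *\<^sub>v (U *\<^sub>v (transpose_mat U *\<^sub>v x)) = transpose_mat U *\<^sub>v x"
      using assoc_mult_mat_vec[of "transpose_mat U" k S U k, OF _ U(1) w] U w by simp
    thus ?thesis
      unfolding y_def using x U by (simp add: mult_minus_distrib_mat_vec[of "transpose_mat U" k S])
  qed
  have Ny: "N *\<^sub>v y = N *\<^sub>v x"
  proof -
    have "N *\<^sub>v (U *\<^sub>v (transpose_mat U *\<^sub>v x)) = 0\<^sub>v S"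
      using assoc_mult_mat_vec[of N S S U k, OF N(1) U(1) w] NU w by simp
    thus ?thesis unfolding y_def using N x U by (simp add: mult_minus_distrib_mat_vec[of N S S])
  qed
  have "x \<bullet> (N *\<^sub>v x) = y \<bullet> (N *\<^sub>v y)"
    using symmetric_bilinear_form[OF N x y] Ny by simp
  thus "0 \<le> x \<bullet> (N *\<^sub>v x)" using compl[OF y Uty] by simp
qed

lemma deflation:
  fixes M U Lam :: "real mat"
  assumes M: "M \<in> carrier_mat S S" "transpose_mat M = M"
    and psd: "\<forall>x\<in>carrier_vec S. 0 \<le> x \<bullet> (M *\<^sub>v x)"
    and U: "U \<in> carrier_mat S k" "transpose_mat U * U = 1\<^sub>m k"
    and Lam: "Lam \<in> carrier_mat k k" "transpose_mat Lam = Lam"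
    and eig: "M * U = U * Lam"
  defines "N \<equiv> M - U * Lam * transpose_mat U"
  shows "N \<in> carrier_mat S S" and "transpose_mat N = N" and "transpose_mat U * N = 0\<^sub>m k S"
    and "\<And>x. x \<in> carrier_vec S \<Longrightarrow> transpose_mat U *\<^sub>v x = 0\<^sub>v k \<Longrightarrow> N *\<^sub>v x = M *\<^sub>v x"
    and "\<forall>x\<in>carrier_vec S. 0 \<le> x \<bullet> (N *\<^sub>v x)"
proof -
  have d[simp]: "dim_row M = S" "dim_col M = S" "dim_row U = S" "dim_col U = k"
    "dim_row Lam = k" "dim_col Lam = k"
    using M U Lam by auto
  show N: "N \<in> carrier_mat S S" unfolding N_def carrier_mat_def by simp
  show Nt: "transpose_mat N = N"
    unfolding N_def using M U Lam
    by (simp add: transpose_minus[of _ S S] transpose_mult_dims mult_assoc_dims)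
  have "N * U = M * U - U * Lam * (transpose_mat U * U)"
    unfolding N_def using M U Lam by (simp add: minus_mult_distrib_mat[of _ S S] mult_assoc_dims)
  hence NU: "N * U = 0\<^sub>m S k" using eig U Lam by simp
  show "transpose_mat U * N = 0\<^sub>m k S"
    using arg_cong[OF NU, of transpose_mat] Nt N by (simp add: transpose_mult_dims)
  have Nx: "N *\<^sub>v x = M *\<^sub>v x" if x: "x \<in> carrier_vec S" "transpose_mat U *\<^sub>v x = 0\<^sub>v k" for x
    unfolding N_def using x M U Lam
    by (simp add: minus_mult_distrib_mat_vec[of _ S S] mult_mat_vec_assoc_dims)
  thus "\<And>x. x \<in> carrier_vec S \<Longrightarrow> transpose_mat U *\<^sub>v x = 0\<^sub>v k \<Longrightarrow> N *\<^sub>v x = M *\<^sub>v x" .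
  show "\<forall>x\<in>carrier_vec S. 0 \<le> x \<bullet> (N *\<^sub>v x)"
    using psd_from_orthogonal_complement[OF N Nt U NU] Nx psd by simp
qed

text \<open>Otherwise the deflated matrix would be a nonzero positive semidefinite
  matrix, and a positive eigenvector of it would be an eigenvector of \<open>M\<close> orthogonal to
  the columns of \<open>U\<close>.\<close>

lemma spectral_decomposition:
  fixes M U Lam :: "real mat"
  assumes M: "M \<in> carrier_mat S S" "transpose_mat M = M"
    and psd: "\<forall>x\<in>carrier_vec S. 0 \<le> x \<bullet> (M *\<^sub>v x)"
    and U: "U \<in> carrier_mat S k" "transpose_mat U * U = 1\<^sub>m k"
    and Lam: "Lam \<in> carrier_mat k k" "transpose_mat Lam = Lam"
    and eig: "M * U = U * Lam"
    and complete: "\<forall>x\<in>carrier_vec S. \<forall>c::real. c > 0 \<longrightarrow> M *\<^sub>v x = c \<cdot>\<^sub>v x \<longrightarrow> in_col_span U x"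
  shows "M = U * Lam * transpose_mat U"
proof (rule ccontr)
  define N where "N = M - U * Lam * transpose_mat U"
  note defl = deflation[OF M psd U Lam eig, folded N_def]
  have M_split: "M = N + U * Lam * transpose_mat U"
    unfolding N_def by (rule eq_matI) (use M U Lam in auto)
  assume "M \<noteq> U * Lam * transpose_mat U"
  hence "N \<noteq> 0\<^sub>m S S" using M_split U Lam by auto
  from psd_nonzero_positive_eigenvalue[OF defl(1,2) defl(5) this] obtain x c
    where x: "x \<in> carrier_vec S" "x \<noteq> 0\<^sub>v S" and c: "c > 0" and Nx: "N *\<^sub>v x = c \<cdot>\<^sub>v x" by blast
  have "c \<cdot>\<^sub>v (transpose_mat U *\<^sub>v x) = transpose_mat U *\<^sub>v (N *\<^sub>v x)"
    using Nx U x by (simp add: mult_mat_vec[of _ k S])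
  also have "\<dots> = 0\<^sub>v k" using defl(1,3) U x by (simp add: mult_mat_vec_assoc_dims[symmetric])
  finally have cUtx: "c \<cdot>\<^sub>v (transpose_mat U *\<^sub>v x) = 0\<^sub>v k" .
  have "transpose_mat U *\<^sub>v x = (1 / c) \<cdot>\<^sub>v (c \<cdot>\<^sub>v (transpose_mat U *\<^sub>v x))"
    using c by (simp add: smult_smult_assoc)
  also have "\<dots> = 0\<^sub>v k" unfolding cUtx by (intro eq_vecI) auto
  finally have Utx: "transpose_mat U *\<^sub>v x = 0\<^sub>v k" .
  obtain a where a: "a \<in> carrier_vec k" "x = U *\<^sub>v a"
    using complete x c Nx defl(4)[OF x(1) Utx] U unfolding in_col_span_def by auto
  have "a = transpose_mat U *\<^sub>v x" using a U by (simp add: mult_mat_vec_assoc_dims[symmetric])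
  hence "x = 0\<^sub>v S" using a Utx U by simp
  thus False using x by simp
qed

lemma diagonal_mat_diag:
  fixes D :: "'a::zero mat"
  assumes "D \<in> carrier_mat n n" "diagonal_mat D"
  shows "D = mat_diag n (\<lambda>i. D $$ (i,i))"
  using assms unfolding diagonal_mat_def mat_diag_def by (intro eq_matI) auto

lemma diagonal_mult_left_index:
  fixes D C :: "'a::semiring_0 mat"
  assumes "D \<in> carrier_mat n n" "diagonal_mat D" "C \<in> carrier_mat n m" "i < n" "j < m"
  shows "(D * C) $$ (i,j) = D $$ (i,i) * C $$ (i,j)"
  using assms by (subst diagonal_mat_diag[OF assms(1,2)]) (simp add: mat_diag_mult_left[of _ n m])

lemma diagonal_mult_right_index:
  fixes D C :: "'a::semiring_0 mat"
  assumes "D \<in> carrier_mat m m" "diagonal_mat D" "C \<in> carrier_mat n m" "i < n" "j < m"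
  shows "(C * D) $$ (i,j) = C $$ (i,j) * D $$ (j,j)"
  using assms by (subst diagonal_mat_diag[OF assms(1,2)]) (simp add: mat_diag_mult_right[of _ n m])

lemma diagonal_transpose:
  fixes D :: "'a::zero mat"
  assumes "D \<in> carrier_mat n n" "diagonal_mat D"
  shows "transpose_mat D = D"
proof (rule eq_matI)
  fix i j assume "i < dim_row D" "j < dim_col D"
  thus "transpose_mat D $$ (i,j) = D $$ (i,j)"
    using assms by (cases "i = j") (auto simp: diagonal_mat_def)
qed (use assms in auto)

lemma nonzero_decr_diagD:
  assumes "nonzero_decr_diag n D"
  shows "D \<in> carrier_mat n n" "diagonal_mat D" "\<forall>i<n. D $$ (i,i) \<noteq> 0"
  using assms unfolding nonzero_decr_diag_def by auto

lemma diagonal_inverse: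
  fixes D :: "real mat"
  assumes D: "D \<in> carrier_mat n n" "diagonal_mat D" and nz: "\<forall>i<n. D $$ (i,i) \<noteq> 0"
  defines "Di \<equiv> mat_diag n (\<lambda>i. 1 / D $$ (i,i))"
  shows "D * Di = 1\<^sub>m n" and "Di * D = 1\<^sub>m n" and "Di \<in> carrier_mat n n"
    and "transpose_mat Di = Di"
proof -
  have D': "D = mat_diag n (\<lambda>i. D $$ (i,i))" by (rule diagonal_mat_diag[OF D])
  have "D * Di = mat_diag n (\<lambda>i. D $$ (i,i)) * Di" using arg_cong[OF D', of "\<lambda>A. A * Di"] .
  also have "\<dots> = 1\<^sub>m n" unfolding Di_def mat_diag_diag using nz
    by (intro eq_matI) (auto simp: mat_diag_def)
  finally show "D * Di = 1\<^sub>m n" .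
  have "Di * D = Di * mat_diag n (\<lambda>i. D $$ (i,i))" using arg_cong[OF D', of "\<lambda>A. Di * A"] .
  also have "\<dots> = 1\<^sub>m n" unfolding Di_def mat_diag_diag using nz
    by (intro eq_matI) (auto simp: mat_diag_def)
  finally show "Di * D = 1\<^sub>m n" .
  show "Di \<in> carrier_mat n n" by (simp add: Di_def)
  show "transpose_mat Di = Di" unfolding Di_def by (intro eq_matI) (auto simp: mat_diag_def)
qed

text \<open>A matrix with \<open>m\<close> rows and \<open>n\<close> orthonormal columns has \<open>n \<le> m\<close>: otherwise padding it
  with zero rows gives a square matrix that is orthogonal but has a zero row.\<close>

lemma orthonormal_columns_le:
  fixes B :: "real mat"
  assumes B: "B \<in> carrier_mat m n" and BB: "transpose_mat B * B = 1\<^sub>m n"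
  shows "n \<le> m"
proof (rule ccontr)
  assume "\<not> n \<le> m"
  hence mn: "m < n" by simp
  define B0 where "B0 = mat n n (\<lambda>(i,j). if i < m then B $$ (i,j) else 0)"
  have B0: "B0 \<in> carrier_mat n n" by (simp add: B0_def)
  have B0i: "B0 $$ (i,j) = (if i < m then B $$ (i,j) else 0)" if "i < n" "j < n" for i j
    using that by (simp add: B0_def)
  have "transpose_mat B0 * B0 = transpose_mat B * B"
  proof (rule eq_matI)
    fix a b assume "a < dim_row (transpose_mat B * B)" "b < dim_col (transpose_mat B * B)"
    hence a: "a < n" and b: "b < n" using B by auto
    have "(transpose_mat B0 * B0) $$ (a,b) = (\<Sum>i\<in>{0..<n}. B0 $$ (i,a) * B0 $$ (i,b))"
      using a b B0 by (simp add: scalar_prod_def)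
    also have "\<dots> = (\<Sum>i\<in>{0..<m}. B $$ (i,a) * B $$ (i,b))"
      by (rule sum.mono_neutral_cong_right) (use mn a b B0i in auto)
    also have "\<dots> = (transpose_mat B * B) $$ (a,b)" using a b B by (simp add: scalar_prod_def)
    finally show "(transpose_mat B0 * B0) $$ (a,b) = (transpose_mat B * B) $$ (a,b)" .
  qed (use B B0 in auto)
  hence "transpose_mat B0 * B0 = 1\<^sub>m n" using BB by simp
  hence one: "B0 * transpose_mat B0 = 1\<^sub>m n"
    using mat_mult_left_right_inverse[of "transpose_mat B0" n B0] B0 by simp
  have "(B0 * transpose_mat B0) $$ (n-1, n-1) = (\<Sum>j\<in>{0..<n}. B0 $$ (n-1,j) * B0 $$ (n-1,j))"
    using mn B0 by (simp add: scalar_prod_def)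
  also have "\<dots> = 0" using mn B0i by (intro sum.neutral) auto
  finally show False using one mn by simp
qed

text \<open>If \<open>\<Psi>\<^sub>p\<^sub>p < \<Phi>\<^sub>p\<^sub>p\<close>, the block \<open>C\<^sub>i\<^sub>j\<close> with \<open>i \<le> p \<le> j\<close> vanishes, so the first \<open>p + 1\<close> rows of
  \<open>C\<close> are orthonormal vectors supported on only \<open>p\<close> coordinates, which is impossible.\<close>

lemma intertwined_sorted_diagonal_le:
  fixes Phi Psi C :: "real mat"
  assumes Phi: "nonzero_decr_diag r Phi" and Psi: "nonzero_decr_diag r Psi"
    and C: "C \<in> carrier_mat r r" "C * transpose_mat C = 1\<^sub>m r"
    and eq: "Phi * C = C * Psi" and p: "p < r"
  shows "Phi $$ (p,p) \<le> Psi $$ (p,p)"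
proof (rule ccontr)
  assume "\<not> ?thesis"
  hence lt: "Psi $$ (p,p) < Phi $$ (p,p)" by simp
  from Phi have Phic: "Phi \<in> carrier_mat r r" "diagonal_mat Phi"
    and Phid: "\<forall>i j. i < j \<longrightarrow> j < r \<longrightarrow> Phi $$ (j,j) \<le> Phi $$ (i,i)"
    unfolding nonzero_decr_diag_def by auto
  from Psi have Psic: "Psi \<in> carrier_mat r r" "diagonal_mat Psi"
    and Psid: "\<forall>i j. i < j \<longrightarrow> j < r \<longrightarrow> Psi $$ (j,j) \<le> Psi $$ (i,i)"
    unfolding nonzero_decr_diag_def by auto
  have block: "C $$ (i,j) = 0" if "i \<le> p" "p \<le> j" "j < r" for i j
  proof -
    have i: "i < r" using that p by simp
    have "Phi $$ (i,i) * C $$ (i,j) = C $$ (i,j) * Psi $$ (j,j)"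
      using arg_cong[OF eq, of "\<lambda>A. A $$ (i,j)"] diagonal_mult_left_index[OF Phic C(1) i that(3)]
        diagonal_mult_right_index[OF Psic C(1) i that(3)] by simp
    moreover have "Phi $$ (p,p) \<le> Phi $$ (i,i)" using Phid that p by (cases "i = p") auto
    moreover have "Psi $$ (j,j) \<le> Psi $$ (p,p)" using Psid that by (cases "j = p") auto
    ultimately show ?thesis using lt by (metis mult.commute mult_cancel_left not_le order_trans)
  qed
  define R where "R = mat p (Suc p) (\<lambda>(a,b). C $$ (b,a))"
  have R: "R \<in> carrier_mat p (Suc p)" by (simp add: R_def)
  have "transpose_mat R * R = 1\<^sub>m (Suc p)"
  proof (rule eq_matI)
    fix a b assume "a < dim_row (1\<^sub>m (Suc p) :: real mat)" "b < dim_col (1\<^sub>m (Suc p) :: real mat)"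
    hence a: "a \<le> p" and b: "b \<le> p" by auto
    have "(transpose_mat R * R) $$ (a,b) = (\<Sum>i\<in>{0..<p}. C $$ (a,i) * C $$ (b,i))"
      using a b R by (simp add: scalar_prod_def R_def)
    also have "\<dots> = (\<Sum>i\<in>{0..<r}. C $$ (a,i) * C $$ (b,i))"
      by (rule sum.mono_neutral_cong_left) (use p block a in auto)
    also have "\<dots> = (C * transpose_mat C) $$ (a,b)" using a b C(1) p by (simp add: scalar_prod_def)
    also have "\<dots> = 1\<^sub>m (Suc p) $$ (a,b)" using C(2) a b p by simp
    finally show "(transpose_mat R * R) $$ (a,b) = 1\<^sub>m (Suc p) $$ (a,b)" .
  qed (use R in auto)
  from orthonormal_columns_le[OF R this] show False by simp
qed

lemma intertwined_sorted_diagonals_eq: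
  fixes Phi Psi C :: "real mat"
  assumes Phi: "nonzero_decr_diag r Phi" and Psi: "nonzero_decr_diag r Psi"
    and C: "C \<in> carrier_mat r r" "transpose_mat C * C = 1\<^sub>m r"
    and eq: "Phi * C = C * Psi"
  shows "Phi = Psi"
proof -
  note Phic = nonzero_decr_diagD(1,2)[OF Phi] and Psic = nonzero_decr_diagD(1,2)[OF Psi]
  have CCt: "C * transpose_mat C = 1\<^sub>m r"
    using mat_mult_left_right_inverse[of "transpose_mat C" r C] C by simp
  have eq': "Psi * transpose_mat C = transpose_mat C * Phi"
    using arg_cong[OF eq, of transpose_mat] Phic Psic C
    by (simp add: transpose_mult[of _ r r _ r] diagonal_transpose)
  have diag_eq: "Phi $$ (p,p) = Psi $$ (p,p)" if "p < r" for p
    using intertwined_sorted_diagonal_le[OF Phi Psi C(1) CCt eq that]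
      intertwined_sorted_diagonal_le[OF Psi Phi _ _ eq' that] C by simp
  show ?thesis
  proof (rule eq_matI)
    fix i j assume "i < dim_row Psi" "j < dim_col Psi"
    thus "Phi $$ (i,j) = Psi $$ (i,j)"
      using diag_eq Phic Psic by (cases "i = j") (auto simp: diagonal_mat_def)
  qed (use Phic Psic in auto)
qed

lemma orthogonal_commuting_distinct_diagonal:
  fixes D C :: "real mat"
  assumes D: "D \<in> carrier_mat r r" "diagonal_mat D"
    and dist: "\<forall>i<r. \<forall>j<r. i \<noteq> j \<longrightarrow> D $$ (i,i) \<noteq> D $$ (j,j)"
    and C: "C \<in> carrier_mat r r" "transpose_mat C * C = 1\<^sub>m r" and comm: "D * C = C * D"
  shows "diagonal_mat C" and "\<forall>i<r. C $$ (i,i) = 1 \<or> C $$ (i,i) = -1"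
proof -
  have off: "C $$ (i,j) = 0" if ij: "i < r" "j < r" "i \<noteq> j" for i j
  proof -
    have "D $$ (i,i) * C $$ (i,j) = C $$ (i,j) * D $$ (j,j)"
      using arg_cong[OF comm, of "\<lambda>X. X $$ (i,j)"] diagonal_mult_left_index[OF D C(1) ij(1,2)]
        diagonal_mult_right_index[OF D C(1) ij(1,2)] by simp
    thus ?thesis using dist ij by (metis mult.commute mult_cancel_left)
  qed
  thus "diagonal_mat C" using C(1) unfolding diagonal_mat_def by auto
  show "\<forall>i<r. C $$ (i,i) = 1 \<or> C $$ (i,i) = -1"
  proof (intro allI impI)
    fix i assume i: "i < r"
    have "(transpose_mat C * C) $$ (i,i) = (\<Sum>l\<in>{0..<r}. C $$ (l,i) * C $$ (l,i))"
      using C(1) i by (simp add: scalar_prod_def)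
    also have "\<dots> = C $$ (i,i) * C $$ (i,i)"
      using off i by (subst sum.remove[of _ i]) (auto intro!: sum.neutral)
    finally show "C $$ (i,i) = 1 \<or> C $$ (i,i) = -1" using C(2) i by (simp add: square_eq_1_iff)
  qed
qed

lemma columns_in_span_factor:
  fixes A B :: "real mat"
  assumes B: "B \<in> carrier_mat n m" and A: "A \<in> carrier_mat n p"
    and span: "\<forall>j<m. in_col_span A (col B j)"
  shows "\<exists>C\<in>carrier_mat p m. B = A * C"
proof -
  have "\<forall>j<m. \<exists>c. c \<in> carrier_vec p \<and> col B j = A *\<^sub>v c"
    using span A unfolding in_col_span_def by auto
  then obtain c where c: "\<And>j. j < m \<Longrightarrow> c j \<in> carrier_vec p \<and> col B j = A *\<^sub>v c j"
    by metis
  define C where "C = mat p m (\<lambda>(i,j). c j $ i)"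
  have C: "C \<in> carrier_mat p m" by (simp add: C_def)
  have colC: "col C j = c j" if "j < m" for j
    using c[OF that] that by (intro eq_vecI) (auto simp: C_def)
  have "B = A * C"
  proof (rule eq_matI)
    fix i j assume "i < dim_row (A * C)" "j < dim_col (A * C)"
    hence i: "i < n" and j: "j < m" using A C by auto
    have "B $$ (i,j) = col B j $ i" using B i j by simp
    also have "\<dots> = row A i \<bullet> col C j" using c[OF j] colC[OF j] A i by simp
    finally show "B $$ (i,j) = (A * C) $$ (i,j)" using A C i j by simp
  qed (use A B C in auto)
  thus ?thesis using C by blast
qed

lemma eigen_column:
  fixes H B D :: "real mat"
  assumes H: "H \<in> carrier_mat n n" and B: "B \<in> carrier_mat n m"
    and D: "D \<in> carrier_mat m m" "diagonal_mat D" and eig: "H * B = B * D" and j: "j < m"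
  shows "H *\<^sub>v col B j = D $$ (j,j) \<cdot>\<^sub>v col B j"
proof -
  have "H *\<^sub>v col B j = col (B * D) j" using col_mult2[OF H B j] eig by simp
  also have "\<dots> = D $$ (j,j) \<cdot>\<^sub>v col B j"
  proof (rule eq_vecI)
    fix i assume "i < dim_vec (D $$ (j,j) \<cdot>\<^sub>v col B j)"
    hence i: "i < n" using B by simp
    have "col (B * D) j $ i = (B * D) $$ (i,j)" using B D i j by simp
    also have "\<dots> = B $$ (i,j) * D $$ (j,j)" by (rule diagonal_mult_right_index[OF D B i j])
    finally show "col (B * D) j $ i = (D $$ (j,j) \<cdot>\<^sub>v col B j) $ i" using B i j by simp
  qed (use B D in auto)
  finally show ?thesis .
qed

lemma eigenvectors_factor_through_complete:
  fixes H B D A :: "real mat"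
  assumes H: "H \<in> carrier_mat n n" and B: "B \<in> carrier_mat n m"
    and D: "D \<in> carrier_mat m m" "diagonal_mat D" "\<forall>j<m. D $$ (j,j) \<noteq> 0"
    and eig: "H * B = B * D" and A: "A \<in> carrier_mat n p"
    and complete: "\<forall>x\<in>carrier_vec n. \<forall>c::real. c \<noteq> 0 \<longrightarrow> H *\<^sub>v x = c \<cdot>\<^sub>v x \<longrightarrow> in_col_span A x"
  shows "\<exists>C\<in>carrier_mat p m. B = A * C"
  using eigen_column[OF H B D(1,2) eig] complete D(3) B
  by (intro columns_in_span_factor[OF B A]) auto

section \<open>The abstract duality\<close>

text \<open>\<open>K\<close> stands for \<open>X\<^sup>T D\<^sub>w\<^sub>L X\<close>, \<open>G = Z\<^sup>T K Z\<close> is the matrix diagonalised by DPCoA and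
  \<open>H = P\<^sup>T K P \<Sigma>\<close> the one diagonalised by gPCA; the two are linked by \<open>Z Z\<^sup>T = P \<Sigma> P\<^sup>T\<close>.\<close>

locale dpcoa_gpca_duality =
  fixes S k :: nat and K Z P Sig :: "real mat"
  assumes K: "K \<in> carrier_mat S S" "transpose_mat K = K"
    and Z: "Z \<in> carrier_mat S k" and P: "P \<in> carrier_mat S S"
    and Sig: "Sig \<in> carrier_mat S S" "transpose_mat Sig = Sig"
    and factor: "Z * transpose_mat Z = P * Sig * transpose_mat P"
begin

abbreviation G :: "real mat" where "G \<equiv> transpose_mat Z * K * Z"

abbreviation H :: "real mat" where "H \<equiv> transpose_mat P * K * P * Sig"

text \<open>Dimension facts, so that associativity and transposition rewrite unconditionally.\<close>

lemma dims [simp]: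
  "dim_row K = S" "dim_col K = S" "dim_row Z = S" "dim_col Z = k" "dim_row P = S" "dim_col P = S"
  "dim_row Sig = S" "dim_col Sig = S"
  using K Z P Sig by auto

lemma G_carrier: "G \<in> carrier_mat k k" and H_carrier: "H \<in> carrier_mat S S"
  unfolding carrier_mat_def by simp_all

text \<open>The factorisation in the right-nested form in which simplification meets it.\<close>

lemma factor_assoc:
  assumes "dim_row W = S"
  shows "Z * (transpose_mat Z * W) = P * (Sig * (transpose_mat P * W))"
proof -
  have "Z * (transpose_mat Z * W) = Z * transpose_mat Z * W"
    using assms by (simp add: mult_assoc_dims)
  also have "\<dots> = P * Sig * transpose_mat P * W" by (simp only: factor)
  also have "\<dots> = P * (Sig * (transpose_mat P * W))" using assms by (simp add: mult_assoc_dims)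
  finally show ?thesis .
qed

lemma gpca_to_dpcoa:
  assumes A: "A \<in> carrier_mat S q" "transpose_mat A * Sig * A = 1\<^sub>m q"
    and Psi: "Psi \<in> carrier_mat q q" "diagonal_mat Psi" "\<forall>i<q. Psi $$ (i,i) \<noteq> 0"
    and eig: "H * A = A * Psi"
  shows "\<exists>F'\<in>carrier_mat k q. transpose_mat F' * F' = 1\<^sub>m q \<and> G * F' = F' * Psi
           \<and> Z * F' = P * Sig * A"
proof -
  define Psinv where "Psinv = mat_diag q (\<lambda>i. 1 / Psi $$ (i,i))"
  note inv = diagonal_inverse[OF Psi, folded Psinv_def]
  have [simp]: "dim_row A = S" "dim_col A = q" "dim_row Psi = q" "dim_col Psi = q"
    "dim_row Psinv = q" "dim_col Psinv = q" "transpose_mat Psi = Psi" "transpose_mat Psinv = Psinv"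
    using A Psi inv diagonal_transpose[OF Psi(1,2)] by auto
  note [simp] = K(2) Sig(2)
  have eigW: "transpose_mat P * (K * (P * (Sig * (A * W)))) = A * (Psi * W)"
    if "dim_row W = q" for W
    using arg_cong[OF eig, of "\<lambda>B. B * W"] that by (simp add: mult_assoc_dims)
  have eig': "transpose_mat P * (K * (P * (Sig * A))) = A * Psi"
    using eig by (simp add: mult_assoc_dims)
  have normW: "transpose_mat A * (Sig * (A * W)) = W" if "dim_row W = q" for W
    using arg_cong[OF A(2), of "\<lambda>B. B * W"] that by (simp add: mult_assoc_dims)
  have invW: "Psi * (Psinv * W) = W" "Psinv * (Psi * W) = W" if "dim_row W = q" for W
    using that inv(1,2) by (simp_all flip: mult_assoc_dims)
  define F' where "F' = transpose_mat Z * (K * (P * (Sig * (A * Psinv))))"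
  have "F' \<in> carrier_mat k q" unfolding F'_def carrier_mat_def by simp
  moreover have "transpose_mat F' * F' = 1\<^sub>m q"
    unfolding F'_def
    by (simp add: mult_assoc_dims transpose_mult_dims factor_assoc eigW eig' normW invW inv(1,2))
  moreover have "G * F' = F' * Psi"
    unfolding F'_def by (simp add: mult_assoc_dims factor_assoc eigW invW inv(1,2))
  moreover have "Z * F' = P * Sig * A"
    unfolding F'_def by (simp add: mult_assoc_dims factor_assoc eigW inv(1))
  ultimately show ?thesis by blast
qed

lemma dpcoa_to_gpca:
  assumes F: "F \<in> carrier_mat k q" "transpose_mat F * F = 1\<^sub>m q"
    and Phi: "Phi \<in> carrier_mat q q" "diagonal_mat Phi" "\<forall>i<q. Phi $$ (i,i) \<noteq> 0"
    and eig: "G * F = F * Phi"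
  shows "\<exists>A'\<in>carrier_mat S q. transpose_mat A' * Sig * A' = 1\<^sub>m q \<and> H * A' = A' * Phi"
proof -
  define Phinv where "Phinv = mat_diag q (\<lambda>i. 1 / Phi $$ (i,i))"
  note inv = diagonal_inverse[OF Phi, folded Phinv_def]
  have [simp]: "dim_row F = k" "dim_col F = q" "dim_row Phi = q" "dim_col Phi = q"
    "dim_row Phinv = q" "dim_col Phinv = q" "transpose_mat Phi = Phi" "transpose_mat Phinv = Phinv"
    using F Phi inv diagonal_transpose[OF Phi(1,2)] by auto
  note [simp] = K(2) Sig(2)
  have factor_rev: "P * (Sig * (transpose_mat P * W)) = Z * (transpose_mat Z * W)"
    if "dim_row W = S" for W
    using factor_assoc[OF that] by simp
  have eigW: "transpose_mat Z * (K * (Z * (F * W))) = F * (Phi * W)" if "dim_row W = q" for W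
    using arg_cong[OF eig, of "\<lambda>B. B * W"] that by (simp add: mult_assoc_dims)
  have eig': "transpose_mat Z * (K * (Z * F)) = F * Phi"
    using eig by (simp add: mult_assoc_dims)
  have normW: "transpose_mat F * (F * W) = W" if "dim_row W = q" for W
    using that F(2) by (simp flip: mult_assoc_dims)
  have invW: "Phi * (Phinv * W) = W" "Phinv * (Phi * W) = W" if "dim_row W = q" for W
    using that inv(1,2) by (simp_all flip: mult_assoc_dims)
  define A' where "A' = transpose_mat P * (K * (Z * (F * Phinv)))"
  have "A' \<in> carrier_mat S q" unfolding A'_def carrier_mat_def by simp
  moreover have "transpose_mat A' * Sig * A' = 1\<^sub>m q"
    unfolding A'_def
    by (simp add: mult_assoc_dims transpose_mult_dims factor_rev eigW eig' normW invW inv(1,2))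
  moreover have "H * A' = A' * Phi"
    unfolding A'_def by (simp add: mult_assoc_dims factor_rev eigW invW inv(1,2))
  ultimately show ?thesis by blast
qed

end

locale dpcoa_gpca_eigensystems = dpcoa_gpca_duality +
  fixes r r' :: nat and Phi F Psi A :: "real mat"
  assumes Phi: "nonzero_decr_diag r Phi"
    and F: "F \<in> carrier_mat k r" "transpose_mat F * F = 1\<^sub>m r"
    and F_eig: "transpose_mat Z * K * Z * F = F * Phi"
    and F_complete: "\<forall>x\<in>carrier_vec k. \<forall>c::real. c \<noteq> 0 \<longrightarrow>
                       (transpose_mat Z * K * Z) *\<^sub>v x = c \<cdot>\<^sub>v x \<longrightarrow> in_col_span F x"
    and Psi: "nonzero_decr_diag r' Psi"
    and A: "A \<in> carrier_mat S r'" "transpose_mat A * Sig * A = 1\<^sub>m r'"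
    and A_eig: "transpose_mat P * K * P * Sig * A = A * Psi"
    and A_complete: "\<forall>x\<in>carrier_vec S. \<forall>c::real. c \<noteq> 0 \<longrightarrow>
                       (transpose_mat P * K * P * Sig) *\<^sub>v x = c \<cdot>\<^sub>v x \<longrightarrow> in_col_span A x"
begin

text \<open>Transporting each eigen-system to the other problem and expressing it in the complete
  family there gives matrices with orthonormal columns in both directions, so \<open>r = r'\<close>,
  and an orthogonal \<open>C\<close> intertwining \<open>\<Phi>\<close> and \<open>\<Psi>\<close>.\<close>

lemma orthogonal_basis_change:
  "r' = r \<and> (\<exists>C\<in>carrier_mat r r'. transpose_mat C * C = 1\<^sub>m r' \<and> Phi * C = C * Psi
     \<and> Z * (F * C) = P * Sig * A)"
proof -
  have [simp]: "dim_row F = k" "dim_col F = r" "dim_row A = S" "dim_col A = r'"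
    "dim_row Phi = r" "dim_col Phi = r" "dim_row Psi = r'" "dim_col Psi = r'"
    using F A nonzero_decr_diagD(1)[OF Phi] nonzero_decr_diagD(1)[OF Psi] by auto
  obtain F' where F': "F' \<in> carrier_mat k r'" "transpose_mat F' * F' = 1\<^sub>m r'"
    and GF': "G * F' = F' * Psi" and ZF': "Z * F' = P * Sig * A"
    using gpca_to_dpcoa[OF A nonzero_decr_diagD[OF Psi] A_eig] by blast
  obtain A' where A': "A' \<in> carrier_mat S r" "transpose_mat A' * Sig * A' = 1\<^sub>m r"
    and HA': "H * A' = A' * Phi"
    using dpcoa_to_gpca[OF F nonzero_decr_diagD[OF Phi] F_eig] by blast
  obtain C1 where C1: "C1 \<in> carrier_mat r' r" and A'_eq: "A' = A * C1"
    using eigenvectors_factor_through_complete[OF H_carrier A'(1) nonzero_decr_diagD[OF Phi] HA'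
        A(1) A_complete] by blast
  have "transpose_mat A' * Sig * A' = transpose_mat C1 * (transpose_mat A * Sig * A) * C1"
    unfolding A'_eq using C1 by (simp add: mult_assoc_dims transpose_mult_dims)
  hence "transpose_mat C1 * C1 = 1\<^sub>m r" using A(2) A'(2) C1 by simp
  hence "r \<le> r'" using orthonormal_columns_le[OF C1] by simp
  obtain C where C: "C \<in> carrier_mat r r'" and F'_eq: "F' = F * C"
    using eigenvectors_factor_through_complete[OF G_carrier F'(1) nonzero_decr_diagD[OF Psi] GF'
        F(1) F_complete] by blast
  have "transpose_mat F' * F' = transpose_mat C * (transpose_mat F * F) * C"
    unfolding F'_eq using C by (simp add: mult_assoc_dims transpose_mult_dims)
  hence CC: "transpose_mat C * C = 1\<^sub>m r'" using F(2) F'(2) C by simp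
  hence "r' \<le> r" using orthonormal_columns_le[OF C] by simp
  have "F * (Phi * C) = F * (C * Psi)"
    using arg_cong[OF F_eig, of "\<lambda>B. B * C"] GF' C unfolding F'_eq by (simp add: mult_assoc_dims)
  hence "transpose_mat F * (F * (Phi * C)) = transpose_mat F * (F * (C * Psi))" by simp
  hence "Phi * C = C * Psi" using C F(2) by (simp flip: mult_assoc_dims)
  moreover have "Z * (F * C) = P * Sig * A" using ZF' F'_eq by simp
  ultimately show ?thesis using \<open>r \<le> r'\<close> \<open>r' \<le> r\<close> C CC by auto
qed

theorem same_spectrum: shows "r' = r" and "Psi = Phi"
proof -
  obtain C where C: "C \<in> carrier_mat r r'" "transpose_mat C * C = 1\<^sub>m r'"
    and intertwine: "Phi * C = C * Psi"
    using orthogonal_basis_change by blast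
  show rr: "r' = r" using orthogonal_basis_change by blast
  show "Psi = Phi"
    using intertwined_sorted_diagonals_eq[OF Phi Psi[unfolded rr] C[unfolded rr] intertwine] by simp
qed

theorem coordinates_up_to_signs:
  assumes dist: "\<forall>i<r. \<forall>j<r. i \<noteq> j \<longrightarrow> Phi $$ (i,i) \<noteq> Phi $$ (j,j)"
  shows "\<exists>E\<in>carrier_mat r r. diagonal_mat E \<and> (\<forall>i<r. E $$ (i,i) = 1 \<or> E $$ (i,i) = -1)
           \<and> Z * F = P * Sig * A * E"
proof -
  obtain C where C: "C \<in> carrier_mat r r'" "transpose_mat C * C = 1\<^sub>m r'"
    and comm: "Phi * C = C * Psi" and ZFC: "Z * (F * C) = P * Sig * A"
    using orthogonal_basis_change by blast
  note C = C[unfolded same_spectrum(1)] and comm = comm[unfolded same_spectrum(2)]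
  note signs =
    orthogonal_commuting_distinct_diagonal[OF nonzero_decr_diagD(1,2)[OF Phi] dist C comm]
  have "C * C = 1\<^sub>m r" using C diagonal_transpose[OF C(1) signs(1)] by simp
  hence "Z * F = Z * (F * C) * C"
    using C F Z by (simp add: mult_assoc_dims)
  also have "\<dots> = P * Sig * A * C" using ZFC by simp
  finally show ?thesis using C(1) signs by blast
qed

end

section \<open>The two factorisations of \<open>P (-\<Delta>/2) P\<^sup>T\<close>\<close>

lemma outer_carrier [simp]: "outer x y \<in> carrier_mat (dim_vec x) (dim_vec y)"
  by (simp add: outer_def)

lemma outer_mult_left:
  assumes "A \<in> carrier_mat n m" "x \<in> carrier_vec m"
  shows "A * outer x y = outer (A *\<^sub>v x) y"
  using assms by (intro eq_matI) (auto simp: outer_def scalar_prod_def sum_distrib_right mult.assoc)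

lemma outer_mult_right:
  assumes "B \<in> carrier_mat m p" "y \<in> carrier_vec m"
  shows "outer x y * B = outer x (transpose_mat B *\<^sub>v y)"
  using assms by (intro eq_matI) (auto simp: outer_def scalar_prod_def sum_distrib_left mult_ac)

text \<open>Both DPCoA and gPCA diagonalise a matrix of the form \<open>(X B)\<^sup>T D (X B)\<close>; pulling out \<open>B\<close>
  exhibits the common core \<open>K = X\<^sup>T D X\<close>.\<close>

lemma gram_mult_right:
  fixes X B D :: "'a::comm_semiring_0 mat"
  assumes X: "X \<in> carrier_mat n m" and B: "B \<in> carrier_mat m p" and D: "D \<in> carrier_mat n n"
  shows "transpose_mat (X * B) * D * (X * B) = transpose_mat B * (transpose_mat X * D * X) * B"
  using X B D by (simp add: transpose_mult_dims mult_assoc_dims)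

lemma centering_ones:
  fixes w :: "real vec"
  assumes w: "w \<in> carrier_vec S" "(\<Sum>j<S. w $ j) = 1"
  shows "(1\<^sub>m S - outer (ones_vec S) w) *\<^sub>v ones_vec S = 0\<^sub>v S"
proof (rule eq_vecI)
  fix i assume "i < dim_vec (0\<^sub>v S :: real vec)"
  hence i: "i < S" by simp
  have "((1\<^sub>m S - outer (ones_vec S) w) *\<^sub>v ones_vec S) $ i
      = (\<Sum>j\<in>{0..<S}. (if i = j then 1 else 0) - w $ j)"
    using i w by (simp add: scalar_prod_def outer_def ones_vec_def)
  also have "\<dots> = 1 - (\<Sum>j<S. w $ j)" using i by (simp add: sum_subtractf atLeast0LessThan)
  finally show "((1\<^sub>m S - outer (ones_vec S) w) *\<^sub>v ones_vec S) $ i = 0\<^sub>v S $ i" using i w(2) by simp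
qed (simp add: ones_vec_def outer_def)

text \<open>A matrix killing \<open>1\<close> on both sides removes the rank-one terms \<open>1 v\<^sup>T + v 1\<^sup>T\<close>; this is
  why \<open>\<Sigma>\<close> may be replaced by \<open>-\<Delta>/2\<close> after centring.\<close>

lemma centered_rank_one_terms:
  fixes P B :: "real mat"
  assumes P: "P \<in> carrier_mat S S" and P1: "P *\<^sub>v ones_vec S = 0\<^sub>v S"
    and v: "v \<in> carrier_vec S" and B: "B \<in> carrier_mat S S"
  shows "P * (outer (ones_vec S) v + outer v (ones_vec S) + B) * transpose_mat P
         = P * B * transpose_mat P"
proof -
  have ones: "ones_vec S \<in> carrier_vec S" by (simp add: ones_vec_def)
  have O: "outer (ones_vec S) v \<in> carrier_mat S S" "outer v (ones_vec S) \<in> carrier_mat S S"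
    using outer_carrier[of "ones_vec S" v] outer_carrier[of v "ones_vec S"] v ones by auto
  have left: "P * outer (ones_vec S) v = 0\<^sub>m S S"
  proof -
    have "P * outer (ones_vec S) v = outer (0\<^sub>v S) v" using outer_mult_left[OF P ones] P1 by simp
    also have "\<dots> = 0\<^sub>m S S" using v by (intro eq_matI) (auto simp: outer_def)
    finally show ?thesis .
  qed
  have right: "outer v (ones_vec S) * transpose_mat P = 0\<^sub>m S S"
  proof -
    have "outer v (ones_vec S) * transpose_mat P = outer v (0\<^sub>v S)"
      using outer_mult_right[of "transpose_mat P" S S "ones_vec S" v] P ones P1 by simp
    also have "\<dots> = 0\<^sub>m S S" using v by (intro eq_matI) (auto simp: outer_def)
    finally show ?thesis .
  qed
  have "P * (outer (ones_vec S) v + outer v (ones_vec S) + B) * transpose_mat P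
      = P * outer (ones_vec S) v * transpose_mat P + P * (outer v (ones_vec S) * transpose_mat P)
        + P * B * transpose_mat P"
    using P O B
    by (simp add: mult_add_distrib_mat[of _ S S] add_mult_distrib_mat[of _ S S] assoc_add_mat[of _ S S])
  also have "\<dots> = P * B * transpose_mat P" unfolding left right using P B by simp
  finally show ?thesis .
qed

lemma psd_congruence:
  fixes D R :: "real mat"
  assumes D: "D \<in> carrier_mat n n" and R: "R \<in> carrier_mat n n"
    and psd: "\<forall>x\<in>carrier_vec n. 0 \<le> x \<bullet> (R *\<^sub>v x)"
  shows "\<forall>x\<in>carrier_vec n. 0 \<le> x \<bullet> ((transpose_mat D * R * D) *\<^sub>v x)"
proof
  fix x :: "real vec" assume x: "x \<in> carrier_vec n"
  have "x \<bullet> ((transpose_mat D * R * D) *\<^sub>v x) = (D *\<^sub>v x) \<bullet> (R *\<^sub>v (D *\<^sub>v x))"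
    using D R x transpose_vec_mult_scalar[of "transpose_mat D" n n "R *\<^sub>v (D *\<^sub>v x)" x]
    by (simp add: mult_mat_vec_assoc_dims comm_scalar_prod[of _ n])
  thus "0 \<le> x \<bullet> ((transpose_mat D * R * D) *\<^sub>v x)" using psd D x by simp
qed

text \<open>The DPCoA species coordinates \<open>Z = D\<^sub>w\<^sup>-\<^sup>1\<^sup>/\<^sup>2 U \<Lambda>\<^sup>1\<^sup>/\<^sup>2\<close> factor \<open>R\<close>: by the spectral decomposition
  \<open>D\<^sub>w\<^sup>1\<^sup>/\<^sup>2 R D\<^sub>w\<^sup>1\<^sup>/\<^sup>2 = U \<Lambda> U\<^sup>T\<close>, hence \<open>Z Z\<^sup>T = D\<^sub>w\<^sup>-\<^sup>1\<^sup>/\<^sup>2 U \<Lambda> U\<^sup>T D\<^sub>w\<^sup>-\<^sup>1\<^sup>/\<^sup>2 = R\<close>.\<close>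

lemma dpcoa_species_gram:
  fixes R U Lambda :: "real mat" and w :: "real vec"
  assumes w: "w \<in> carrier_vec S" "\<forall>j<S. 0 < w $ j"
    and R: "R \<in> carrier_mat S S" "transpose_mat R = R" "\<forall>x\<in>carrier_vec S. 0 \<le> x \<bullet> (R *\<^sub>v x)"
    and U: "U \<in> carrier_mat S k" "transpose_mat U * U = 1\<^sub>m k"
    and Lambda: "Lambda \<in> carrier_mat k k" "diagonal_mat Lambda" "\<forall>i<k. 0 < Lambda $$ (i,i)"
    and eig: "Dw_sqrt w * R * Dw_sqrt w * U = U * Lambda"
    and complete: "\<forall>x\<in>carrier_vec S. \<forall>c::real. c > 0 \<longrightarrow>
                     (Dw_sqrt w * R * Dw_sqrt w) *\<^sub>v x = c \<cdot>\<^sub>v x \<longrightarrow> in_col_span U x"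
  defines "Z \<equiv> Dw_invsqrt w * U * diag_sqrt Lambda"
  shows "Z * transpose_mat Z = R"
proof -
  define Dh where "Dh = Dw_sqrt w"
  define Di where "Di = Dw_invsqrt w"
  define Lh where "Lh = diag_sqrt Lambda"
  have wdim: "dim_vec w = S" using w(1) by simp
  have Dh: "Dh \<in> carrier_mat S S" "transpose_mat Dh = Dh"
    unfolding Dh_def Dw_sqrt_def wdim by (auto intro!: eq_matI simp: mat_diag_def)
  have Di: "Di \<in> carrier_mat S S" "transpose_mat Di = Di"
    unfolding Di_def Dw_invsqrt_def wdim by (auto intro!: eq_matI simp: mat_diag_def)
  have DiDh: "Di * Dh = 1\<^sub>m S" "Dh * Di = 1\<^sub>m S"
    unfolding Di_def Dh_def Dw_invsqrt_def Dw_sqrt_def wdim mat_diag_diag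
    using w(2) by (auto intro!: eq_matI simp: mat_diag_def)
  have Lh_diag: "Lh = mat_diag k (\<lambda>i. sqrt (Lambda $$ (i,i)))"
    unfolding Lh_def diag_sqrt_def using Lambda(1) by simp
  have Lh: "Lh \<in> carrier_mat k k" "transpose_mat Lh = Lh"
    unfolding Lh_diag by (auto intro!: eq_matI simp: mat_diag_def)
  have "Lh * Lh = mat_diag k (\<lambda>i. Lambda $$ (i,i))"
    unfolding Lh_diag mat_diag_diag using Lambda(3)
    by (auto intro!: eq_matI simp: mat_diag_def less_imp_le)
  also have "\<dots> = Lambda" by (rule sym[OF diagonal_mat_diag[OF Lambda(1,2)]])
  finally have LhLh: "Lh * Lh = Lambda" .
  define M where "M = Dh * R * Dh"
  have M: "M \<in> carrier_mat S S" "transpose_mat M = M"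
    unfolding M_def using Dh R by (auto simp: transpose_mult_dims mult_assoc_dims)
  have M_psd: "\<forall>x\<in>carrier_vec S. 0 \<le> x \<bullet> (M *\<^sub>v x)"
    using psd_congruence[OF Dh(1) R(1,3)] Dh(2) unfolding M_def by simp
  have "M = U * Lambda * transpose_mat U"
    using spectral_decomposition[OF M M_psd U Lambda(1) diagonal_transpose[OF Lambda(1,2)]]
      eig complete unfolding M_def Dh_def by blast
  hence M_spectral: "M = U * (Lh * Lh) * transpose_mat U" unfolding LhLh .
  have "Z * transpose_mat Z = Di * (U * (Lh * Lh) * transpose_mat U) * Di"
    unfolding Z_def Di_def[symmetric] Lh_def[symmetric] using Di U Lh
    by (simp add: transpose_mult_dims mult_assoc_dims)
  also have "\<dots> = Di * M * Di" unfolding M_spectral ..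
  also have "\<dots> = (Di * Dh) * R * (Dh * Di)"
    unfolding M_def using Di Dh R by (simp add: mult_assoc_dims)
  finally show ?thesis using DiDh R by simp
qed

text \<open>Both factorisations identify \<open>Z Z\<^sup>T\<close> with \<open>P \<Sigma> P\<^sup>T\<close>; the spectral matrices of DPCoA and
  gPCA are \<open>(X Z)\<^sup>T D\<^sub>w\<^sub>L (X Z)\<close> and \<open>(X P)\<^sup>T D\<^sub>w\<^sub>L (X P) \<Sigma>\<close>, so the abstract duality applies with
  \<open>K = X\<^sup>T D\<^sub>w\<^sub>L X\<close>.  Multiplying the species relation by \<open>X\<close> gives the location relation.\<close>

theorem mainTheorem1:
  fixes S L k r r' :: nat
    and X Delta U Lambda F Phi A Psi :: "real mat"
    and wS wL v :: "real vec"
  defines "P \<equiv> 1\<^sub>m S - outer (ones_vec S) wS"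
    and "Sig \<equiv> outer (ones_vec S) v + outer v (ones_vec S) - (1/2) \<cdot>\<^sub>m Delta"
    and "Xt \<equiv> X * (1\<^sub>m S - outer (ones_vec S) wS)"
    and "M \<equiv> Dw_sqrt wS * (1\<^sub>m S - outer (ones_vec S) wS) * (-(1/2) \<cdot>\<^sub>m Delta)
              * transpose_mat (1\<^sub>m S - outer (ones_vec S) wS) * Dw_sqrt wS"
    and "Z \<equiv> Dw_invsqrt wS * U * diag_sqrt Lambda"
    and "Y \<equiv> X * (Dw_invsqrt wS * U * diag_sqrt Lambda)"
  assumes X: "X \<in> carrier_mat L S"
    and X_nonneg: "\<forall>i<L. \<forall>j<S. 0 \<le> X $$ (i,j)"
    and X_rows: "\<forall>i<L. (\<Sum>j<S. X $$ (i,j)) = 1"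
    and wS: "wS \<in> carrier_vec S" "\<forall>j<S. 0 < wS $ j" "(\<Sum>j<S. wS $ j) = 1"
    and wL: "wL \<in> carrier_vec L" "\<forall>i<L. 0 < wL $ i" "(\<Sum>i<L. wL $ i) = 1"
    and Delta: "Delta \<in> carrier_mat S S" "transpose_mat Delta = Delta" "\<forall>j<S. Delta $$ (j,j) = 0"
    and Delta_eucl: "psd_mat S (P * (-(1/2) \<cdot>\<^sub>m Delta) * transpose_mat P)"
    and v: "v \<in> carrier_vec S"
    and Sig_pd: "pd_mat S Sig"
    \<comment> \<open>DPCoA: U, Lambda = orthonormal eigenvectors / positive eigenvalues of M\<close>
    and U: "U \<in> carrier_mat S k" "transpose_mat U * U = 1\<^sub>m k"
    and Lambda: "Lambda \<in> carrier_mat k k" "diagonal_mat Lambda" "\<forall>i<k. 0 < Lambda $$ (i,i)"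
    and U_eig: "M * U = U * Lambda"
    and U_all: "\<forall>x \<in> carrier_vec S. \<forall>c::real. c > 0 \<longrightarrow> M *\<^sub>v x = c \<cdot>\<^sub>v x \<longrightarrow> in_col_span U x"
    \<comment> \<open>r = rank Y; Phi, F: nonzero eigenvalues (decreasing) and orthonormal eigenvectors of Y^T D_wL Y\<close>
    and r: "r = vec_space.rank L Y"
    and Phi: "nonzero_decr_diag r Phi"
    and F: "F \<in> carrier_mat k r" "transpose_mat F * F = 1\<^sub>m r"
    and F_eig: "(transpose_mat Y * Dw wL * Y) * F = F * Phi"
    and F_all: "\<forall>x \<in> carrier_vec k. \<forall>c::real. c \<noteq> 0 \<longrightarrow>
                  (transpose_mat Y * Dw wL * Y) *\<^sub>v x = c \<cdot>\<^sub>v x \<longrightarrow> in_col_span F x"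
    \<comment> \<open>gPCA: Psi, A: nonzero eigenvalues (decreasing) and Sig-normalized eigenvectors of Xt^T D_wL Xt Sig\<close>
    and Psi: "nonzero_decr_diag r' Psi"
    and A: "A \<in> carrier_mat S r'" "transpose_mat A * Sig * A = 1\<^sub>m r'"
    and A_eig: "(transpose_mat Xt * Dw wL * Xt * Sig) * A = A * Psi"
    and A_all: "\<forall>x \<in> carrier_vec S. \<forall>c::real. c \<noteq> 0 \<longrightarrow>
                  (transpose_mat Xt * Dw wL * Xt * Sig) *\<^sub>v x = c \<cdot>\<^sub>v x \<longrightarrow> in_col_span A x"
  shows "r' = r \<and> Psi = Phi \<and>
    ((\<forall>i<r. \<forall>j<r. i \<noteq> j \<longrightarrow> Phi $$ (i,i) \<noteq> Phi $$ (j,j)) \<longrightarrow>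
      (\<exists>E. E \<in> carrier_mat r r \<and> diagonal_mat E \<and> (\<forall>i<r. E $$ (i,i) = 1 \<or> E $$ (i,i) = -1) \<and>
           Y * F = Xt * Sig * A * E \<and> Z * F = P * Sig * A * E))"
proof -
  have P: "P \<in> carrier_mat S S"
    unfolding P_def carrier_mat_def using wS(1) by (simp add: ones_vec_def outer_def)
  have Sig: "Sig \<in> carrier_mat S S" "transpose_mat Sig = Sig"
    using Sig_pd unfolding pd_mat_def by auto
  define R where "R = P * (-(1/2) \<cdot>\<^sub>m Delta) * transpose_mat P"
  have R: "R \<in> carrier_mat S S" "transpose_mat R = R" "\<forall>x\<in>carrier_vec S. 0 \<le> x \<bullet> (R *\<^sub>v x)"
    using Delta_eucl unfolding psd_mat_def R_def by auto
  have "Sig = outer (ones_vec S) v + outer v (ones_vec S) + (-(1/2) \<cdot>\<^sub>m Delta)"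
    unfolding Sig_def using Delta(1) v by (intro eq_matI) (auto simp: ones_vec_def)
  hence PSigP: "P * Sig * transpose_mat P = R"
    unfolding R_def using centered_rank_one_terms[OF P _ v] centering_ones[OF wS(1,3)] Delta(1)
    by (simp add: P_def)
  have "M = Dw_sqrt wS * P * (-(1/2) \<cdot>\<^sub>m Delta) * transpose_mat P * Dw_sqrt wS"
    unfolding M_def P_def ..
  hence M: "M = Dw_sqrt wS * R * Dw_sqrt wS"
    unfolding R_def using wS(1) P Delta(1) by (simp add: mult_assoc_dims Dw_sqrt_def mat_diag_def)
  have ZZ: "Z * transpose_mat Z = R"
    unfolding Z_def
    by (rule dpcoa_species_gram[OF wS(1,2) R U Lambda U_eig[unfolded M] U_all[unfolded M]])
  define K where "K = transpose_mat X * Dw wL * X"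
  have DL: "Dw wL \<in> carrier_mat L L" "transpose_mat (Dw wL) = Dw wL"
    unfolding Dw_def using wL(1) by (auto intro!: eq_matI simp: mat_diag_def)
  have K: "K \<in> carrier_mat S S" "transpose_mat K = K"
    unfolding K_def using X DL by (auto simp: transpose_mult_dims mult_assoc_dims)
  have Z: "Z \<in> carrier_mat S k"
    unfolding Z_def Dw_invsqrt_def diag_sqrt_def carrier_mat_def using wS(1) U Lambda(1)
    by (simp add: mat_diag_def)
  have Y: "Y = X * Z" unfolding Y_def Z_def ..
  have Xt: "Xt = X * P" unfolding Xt_def P_def ..
  interpret dpcoa_gpca_eigensystems S k K Z P Sig r r' Phi F Psi A
    using K Z P Sig ZZ PSigP Phi F F_eig F_all Psi A A_eig A_all
    unfolding Y Xt gram_mult_right[OF X Z DL(1)] gram_mult_right[OF X P DL(1), folded K_def]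
    by unfold_locales (simp_all flip: K_def)
  have "Y * F = Xt * Sig * A * E" if "Z * F = P * Sig * A * E" "E \<in> carrier_mat r r" for E
    unfolding Y Xt using that X Z F P Sig A same_spectrum(1) by (simp add: mult_assoc_dims)
  thus ?thesis using same_spectrum coordinates_up_to_signs by blast
qed

end
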